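(* Let $\mathcal{A}$ be a finite abelian group with $|\mathcal{A}|\ge 3$. Let $G$ be the graph consisting of a $5$-cycle $v_1v_2v_3v_4v_5v_1$ together with one further neighbour $u$ of $v_2$, where $u$ is a support vertex all of whose neighbours other than $v_2$ are pendant vertices (so $d(v_2)=3$). Then $G$ is $\mathcal{A}$-vertex magic if and only if $|\mathcal{A}|$ is even.
   Context: A pendant vertex has degree $1$; a support vertex is adjacent to at least one pendant vertex. A map $\ell:V(G)\to\mathcal{A}\setminus\{0\}$ is an $\mathcal{A}$-vertex magic labeling if there is $\mu\in\mathcal{A}$ with $\sum_{w\in N(v)}\ell(w)=\mu$ for every vertex $v$; $G$ is $\mathcal{A}$-vertex magic if such a labeling exists. *)

theory Defs
  imports Main
begin

definition nbhd :: "'v set \<Rightarrow> ('v \<Rightarrow> 'v \<Rightarrow> bool) \<Rightarrow> 'v \<Rightarrow> 'v set" where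
  "nbhd V E v = {w \<in> V. E v w}"

definition is_vertex_magic_labeling ::
  "'v set \<Rightarrow> ('v \<Rightarrow> 'v \<Rightarrow> bool) \<Rightarrow> ('v \<Rightarrow> 'a::comm_monoid_add) \<Rightarrow> bool" where
  "is_vertex_magic_labeling V E l \<longleftrightarrow>
     (\<forall>v\<in>V. l v \<noteq> 0) \<and> (\<exists>mu. \<forall>v\<in>V. (\<Sum>w\<in>nbhd V E v. l w) = mu)"

definition vertex_magic :: "'a::comm_monoid_add itself \<Rightarrow> 'v set \<Rightarrow> ('v \<Rightarrow> 'v \<Rightarrow> bool) \<Rightarrow> bool" where
  "vertex_magic (_::'a itself) V E \<longleftrightarrow>
     (\<exists>l::'v \<Rightarrow> 'a. is_vertex_magic_labeling V E l)"

text \<open>The graph of the corollary: 5-cycle C 0 .. C 4 (v1..v5, so v2 = C 1),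
a vertex U adjacent to C 1, and k pendant vertices P 0 .. P (k-1) adjacent to U.\<close>
datatype vtx = C nat | U | P nat

definition cyc_pend_V :: "nat \<Rightarrow> vtx set" where
  "cyc_pend_V k = {C i | i. i < 5} \<union> {U} \<union> {P j | j. j < k}"

fun cyc_pend_E0 :: "vtx \<Rightarrow> vtx \<Rightarrow> bool" where
  "cyc_pend_E0 (C i) (C j) = (j = (i + 1) mod 5)"
| "cyc_pend_E0 (C i) U = (i = 1)"
| "cyc_pend_E0 U (P j) = True"
| "cyc_pend_E0 _ _ = False"

definition cyc_pend_E :: "vtx \<Rightarrow> vtx \<Rightarrow> bool" where
  "cyc_pend_E x y \<longleftrightarrow> cyc_pend_E0 x y \<or> cyc_pend_E0 y x"

end

theory Submission
  imports Defs "HOL-Library.Disjoint_Sets" "HOL-Library.Z2"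
begin

text \<open>The pendant neighbours of u force the magic constant to be the label of u, so the
  equation at v2 makes the labels of v1 and v3 sum to 0, while the equations along the
  cycle force them to be equal: the label of v1 is a nonzero element of order 2, which
  exists iff the order of the group is even.  Conversely, given such an element a, label
  v1, v2, v3 by a, v4, v5 by b, u by a + b and the pendant vertices by nonzero elements
  summing to b; every neighbourhood sum is then a + b, and the labels are nonzero as soon
  as b is neither 0 nor a, which a group of order at least 4 allows.\<close>

lemma even_card_if_fixpoint_free_involution:
  assumes "\<And>x. x \<in> X \<Longrightarrow> h x \<in> X" and "\<And>x. x \<in> X \<Longrightarrow> h (h x) = x"
    and "\<And>x. x \<in> X \<Longrightarrow> h x \<noteq> x"
  shows "even (card X)"
proof -
  \<comment> \<open>Count X in the two-element ring: the orbits {x, h x} each contribute 1 + 1 = 0.\<close>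
  have "(\<Sum>x\<in>X. 1 :: bit) = 0"
    by (rule sum_involution_eq_0[where h = h])
      (use assms in \<open>simp_all add: one_add_one del: add_bit_eq_xor\<close>)
  then have "of_nat (card X) = (0 :: bit)"
    by simp
  then show ?thesis
    by (metis even_of_nat_iff even_zero)
qed

lemma even_card_UNIV_iff_ex_order_two:
  "even (card (UNIV :: 'a::{ab_group_add, finite} set)) \<longleftrightarrow> (\<exists>x::'a. x \<noteq> 0 \<and> x + x = 0)"
proof
  assume even: "even (card (UNIV :: 'a set))"
  show "\<exists>x::'a. x \<noteq> 0 \<and> x + x = 0"
  proof (rule ccontr)
    assume "\<nexists>x::'a. x \<noteq> 0 \<and> x + x = 0"
    then have "even (card (UNIV - {0::'a}))"
      by (intro even_card_if_fixpoint_free_involution[where h = uminus])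
        (auto simp: add_eq_0_iff)
    moreover have "card (UNIV :: 'a set) = Suc (card (UNIV - {0::'a}))"
      by (simp add: card_Diff_singleton Suc_diff_1 finite_UNIV_card_ge_0)
    ultimately show False
      using even by (metis even_Suc)
  qed
next
  assume "\<exists>x::'a. x \<noteq> 0 \<and> x + x = 0"
  then obtain x :: 'a where "x \<noteq> 0" and "x + x = 0"
    by blast
  then show "even (card (UNIV :: 'a set))"
    by (intro even_card_if_fixpoint_free_involution[where h = "\<lambda>z. z + x"])
      (auto simp: add.assoc)
qed

lemma ex_not_mem_if_card_less:
  "card F < card (UNIV :: 'a::finite set) \<Longrightarrow> \<exists>x::'a. x \<notin> F"
  by (metis UNIV_eq_I less_irrefl)

lemma ex_nonzero_summands_avoiding:
  fixes a :: "'a::{ab_group_add, finite}" and k :: nat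
  assumes "card (UNIV :: 'a set) \<ge> 4" and "k \<ge> 1"
  shows "\<exists>q. (\<forall>j<k. q j \<noteq> 0) \<and> (\<Sum>j<k. q j) \<notin> {0, a}"
proof -
  obtain n where k: "k = Suc n"
    using assms(2) by (cases k) auto
  have "card {0::'a} < card (UNIV :: 'a set)"
    using assms(1) by simp
  then obtain c :: 'a where c: "c \<noteq> 0"
    using ex_not_mem_if_card_less by blast
  define s where "s = (\<Sum>i<n. c)"
  have "card {0, - s, a - s} \<le> 3"
    by (simp add: card_insert_le_m1)
  then have "card {0, - s, a - s} < card (UNIV :: 'a set)"
    using assms(1) by simp
  then obtain y :: 'a where y: "y \<notin> {0, - s, a - s}"
    using ex_not_mem_if_card_less by blast
  define q where "q j = (if j = 0 then y else c)" for j :: nat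
  have "(\<Sum>j<k. q j) = y + s"
    unfolding k sum.lessThan_Suc_shift by (simp add: q_def s_def)
  then have "(\<Sum>j<k. q j) \<notin> {0, a}"
    using y by (auto simp: add_eq_0_iff eq_diff_eq)
  moreover have "\<forall>j<k. q j \<noteq> 0"
    using c y by (simp add: q_def)
  ultimately show ?thesis
    by blast
qed

lemma cyc_pend_V_eq: "cyc_pend_V k = {C 0, C 1, C 2, C 3, C 4, U} \<union> P ` {..<k}"
proof -
  have "{C i | i. i < 5} = {C 0, C 1, C 2, C 3, C 4}"
    by (auto simp: less_Suc_eq numeral_eq_Suc)
  then show ?thesis
    unfolding cyc_pend_V_def by auto
qed

lemma cyc_pend_nbhd:
  "nbhd (cyc_pend_V k) cyc_pend_E (C 0) = {C 1, C 4}"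
  "nbhd (cyc_pend_V k) cyc_pend_E (C 1) = {C 0, C 2, U}"
  "nbhd (cyc_pend_V k) cyc_pend_E (C 2) = {C 1, C 3}"
  "nbhd (cyc_pend_V k) cyc_pend_E (C 3) = {C 2, C 4}"
  "nbhd (cyc_pend_V k) cyc_pend_E (C 4) = {C 0, C 3}"
  "nbhd (cyc_pend_V k) cyc_pend_E U = insert (C 1) (P ` {..<k})"
  "nbhd (cyc_pend_V k) cyc_pend_E (P j) = {U}"
  unfolding nbhd_def cyc_pend_V_eq cyc_pend_E_def by auto

lemma cyc_pend_nbhd_sum:
  fixes f :: "vtx \<Rightarrow> 'a::comm_monoid_add"
  shows "(\<Sum>w\<in>nbhd (cyc_pend_V k) cyc_pend_E (C 0). f w) = f (C 1) + f (C 4)"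
    "(\<Sum>w\<in>nbhd (cyc_pend_V k) cyc_pend_E (C 1). f w) = f (C 0) + (f (C 2) + f U)"
    "(\<Sum>w\<in>nbhd (cyc_pend_V k) cyc_pend_E (C 2). f w) = f (C 1) + f (C 3)"
    "(\<Sum>w\<in>nbhd (cyc_pend_V k) cyc_pend_E (C 3). f w) = f (C 2) + f (C 4)"
    "(\<Sum>w\<in>nbhd (cyc_pend_V k) cyc_pend_E (C 4). f w) = f (C 0) + f (C 3)"
    "(\<Sum>w\<in>nbhd (cyc_pend_V k) cyc_pend_E U. f w) = f (C 1) + (\<Sum>j<k. f (P j))"
    "(\<Sum>w\<in>nbhd (cyc_pend_V k) cyc_pend_E (P j). f w) = f U"
  unfolding cyc_pend_nbhd by (simp_all add: sum.reindex inj_on_def image_iff)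

lemma cyc_pend_magic_label_order_two:
  fixes l :: "vtx \<Rightarrow> 'a::ab_group_add"
  assumes "is_vertex_magic_labeling (cyc_pend_V k) cyc_pend_E l" and "k \<ge> 1"
  shows "l (C 0) \<noteq> 0" and "l (C 0) + l (C 0) = 0"
proof -
  let ?V = "cyc_pend_V k"
  obtain mu where mu: "\<And>v. v \<in> ?V \<Longrightarrow> (\<Sum>w\<in>nbhd ?V cyc_pend_E v. l w) = mu"
    using assms(1) unfolding is_vertex_magic_labeling_def by blast
  have at_v1: "l (C 1) + l (C 4) = mu"
    using mu[of "C 0"] unfolding cyc_pend_nbhd_sum by (simp add: cyc_pend_V_eq)
  have at_v2: "l (C 0) + (l (C 2) + l U) = mu"
    using mu[of "C 1"] unfolding cyc_pend_nbhd_sum by (simp add: cyc_pend_V_eq)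
  have at_v3: "l (C 1) + l (C 3) = mu"
    using mu[of "C 2"] unfolding cyc_pend_nbhd_sum by (simp add: cyc_pend_V_eq)
  have at_v4: "l (C 2) + l (C 4) = mu"
    using mu[of "C 3"] unfolding cyc_pend_nbhd_sum by (simp add: cyc_pend_V_eq)
  have at_v5: "l (C 0) + l (C 3) = mu"
    using mu[of "C 4"] unfolding cyc_pend_nbhd_sum by (simp add: cyc_pend_V_eq)
  have at_pendant: "l U = mu"
    using mu[of "P 0"] assms(2) unfolding cyc_pend_nbhd_sum by (simp add: cyc_pend_V_eq)
  have "l (C 3) = l (C 4)"
    using at_v1 at_v3 by (metis add_left_cancel)
  then have "l (C 2) = l (C 0)"
    using at_v4 at_v5 by (metis add_right_cancel)
  then show "l (C 0) + l (C 0) = 0"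
    using at_v2 at_pendant by (metis add.assoc add_0 add_right_cancel)
  show "l (C 0) \<noteq> 0"
    using assms(1) unfolding is_vertex_magic_labeling_def by (simp add: cyc_pend_V_eq)
qed

definition cyc_pend_label :: "'a::ab_group_add \<Rightarrow> 'a \<Rightarrow> (nat \<Rightarrow> 'a) \<Rightarrow> vtx \<Rightarrow> 'a" where
  "cyc_pend_label a b q v = (case v of C i \<Rightarrow> if i < 3 then a else b | U \<Rightarrow> a + b | P j \<Rightarrow> q j)"

lemma cyc_pend_label_magic:
  fixes a b :: "'a::ab_group_add"
  assumes "a \<noteq> 0" and "a + a = 0" and "b \<notin> {0, a}"
    and "\<forall>j<k. q j \<noteq> 0" and "(\<Sum>j<k. q j) = b"
  shows "is_vertex_magic_labeling (cyc_pend_V k) cyc_pend_E (cyc_pend_label a b q)"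
  unfolding is_vertex_magic_labeling_def
proof (intro conjI exI ballI)
  fix v
  assume "v \<in> cyc_pend_V k"
  moreover have "a + b \<noteq> 0"
    using assms(2,3) by (metis add_left_cancel insertCI)
  ultimately show "cyc_pend_label a b q v \<noteq> 0"
    using assms by (auto simp: cyc_pend_V_eq cyc_pend_label_def)
next
  fix v
  assume "v \<in> cyc_pend_V k"
  then consider "v = C 0" | "v = C 1" | "v = C 2" | "v = C 3" | "v = C 4" | "v = U" | j where "v = P j"
    unfolding cyc_pend_V_eq by auto
  then show "(\<Sum>w\<in>nbhd (cyc_pend_V k) cyc_pend_E v. cyc_pend_label a b q w) = a + b"
    using assms(2,5)
    by cases (simp_all only: cyc_pend_nbhd_sum, simp_all add: cyc_pend_label_def)
qed

theorem corollary3p11: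
  fixes k :: nat
  assumes "card (UNIV :: ('a::{ab_group_add, finite}) set) \<ge> 3"
    and "k \<ge> 1"
  shows "vertex_magic TYPE('a) (cyc_pend_V k) cyc_pend_E \<longleftrightarrow> even (card (UNIV :: 'a set))"
proof
  assume "vertex_magic TYPE('a) (cyc_pend_V k) cyc_pend_E"
  then obtain l :: "vtx \<Rightarrow> 'a" where "is_vertex_magic_labeling (cyc_pend_V k) cyc_pend_E l"
    unfolding vertex_magic_def by blast
  then have "l (C 0) \<noteq> 0" and "l (C 0) + l (C 0) = 0"
    using cyc_pend_magic_label_order_two assms(2) by blast+
  then show "even (card (UNIV :: 'a set))"
    using even_card_UNIV_iff_ex_order_two by blast
next
  assume even: "even (card (UNIV :: 'a set))"
  then obtain a :: 'a where a: "a \<noteq> 0" "a + a = 0"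
    using even_card_UNIV_iff_ex_order_two by blast
  have "card (UNIV :: 'a set) \<ge> 4"
    using assms(1) even by presburger
  then obtain q :: "nat \<Rightarrow> 'a" where "\<forall>j<k. q j \<noteq> 0" and "(\<Sum>j<k. q j) \<notin> {0, a}"
    using ex_nonzero_summands_avoiding[of k a] assms(2) by blast
  then have "is_vertex_magic_labeling (cyc_pend_V k) cyc_pend_E (cyc_pend_label a (\<Sum>j<k. q j) q)"
    using a by (simp add: cyc_pend_label_magic)
  then show "vertex_magic TYPE('a) (cyc_pend_V k) cyc_pend_E"
    unfolding vertex_magic_def by blast
qed

end
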